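(* Let $G$ be a graph with vertex set $\{v_1,\dots,v_n\}$ and let $k\ge 2$ be an integer. Construct a graph $G'$ as follows. Its vertices are the "$v$-type" vertices $v_{i,j}$ for $1\le i\le n$, $1\le j\le k$, and the "$u$-type" vertices $u_{i,j}$ for $1\le i,j\le k$, $i\ne j$. For any vertex $x_{i,j}$ (of either type), $i$ is its row number and $j$ its column number. The edges of $G'$ are: (1) column edges: every two distinct vertices (of any types) with the same column number are adjacent; (2) row edges: every two distinct $v$-type vertices with the same row number are adjacent; (3) diagonal edges: $u_{i,j}$ and $u_{i',j'}$ are adjacent whenever $i\neq i'$ and $j\ne j'$; (4) cross edges: $u_{a,b}$ and $v_{c,d}$ are adjacent if and only if $a=d$; (5) $G$-edges: $v_{i,j}$ and $v_{i',j'}$ are adjacent whenever $v_iv_{i'}\in E(G)$; and there are no other edges. Then: (a) $i(G')=k-1$; (b) $\mu_\alpha(G')\le 1$; (c) $\alpha(G)\ge k$ if and only if $\alpha(G')\ge k$; (d) $\alpha(G)\ge k$ if and only if $G'$ is not well-covered.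
   Context: All graphs are finite, simple and undirected. For a graph $G$, $\alpha(G)$ is the maximum size of an independent set and $i(G)$ is the minimum size of a maximal (with respect to inclusion) independent set; the independence gap is $\mu_\alpha(G)=\alpha(G)-i(G)$. A graph is well-covered if all its maximal independent sets have the same size. *)

theory Defs
  imports Main
begin

definition simple_graph :: "'a set \<Rightarrow> ('a \<Rightarrow> 'a \<Rightarrow> bool) \<Rightarrow> bool" where
  "simple_graph V E \<longleftrightarrow> finite V \<and> (\<forall>x y. E x y \<longrightarrow> E y x) \<and> (\<forall>x. \<not> E x x)
     \<and> (\<forall>x y. E x y \<longrightarrow> x \<in> V \<and> y \<in> V)"

definition indep_set :: "'a set \<Rightarrow> ('a \<Rightarrow> 'a \<Rightarrow> bool) \<Rightarrow> 'a set \<Rightarrow> bool" where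
  "indep_set V E S \<longleftrightarrow> S \<subseteq> V \<and> (\<forall>x\<in>S. \<forall>y\<in>S. x \<noteq> y \<longrightarrow> \<not> E x y)"

definition maximal_indep_set :: "'a set \<Rightarrow> ('a \<Rightarrow> 'a \<Rightarrow> bool) \<Rightarrow> 'a set \<Rightarrow> bool" where
  "maximal_indep_set V E S \<longleftrightarrow> indep_set V E S \<and> (\<forall>T. indep_set V E T \<and> S \<subseteq> T \<longrightarrow> T = S)"

definition indep_number :: "'a set \<Rightarrow> ('a \<Rightarrow> 'a \<Rightarrow> bool) \<Rightarrow> nat" where
  "indep_number V E = Max (card ` {S. indep_set V E S})"

definition indep_domination_number :: "'a set \<Rightarrow> ('a \<Rightarrow> 'a \<Rightarrow> bool) \<Rightarrow> nat" where
  "indep_domination_number V E = Min (card ` {S. maximal_indep_set V E S})"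

definition indep_gap :: "'a set \<Rightarrow> ('a \<Rightarrow> 'a \<Rightarrow> bool) \<Rightarrow> int" where
  "indep_gap V E = int (indep_number V E) - int (indep_domination_number V E)"

definition well_covered :: "'a set \<Rightarrow> ('a \<Rightarrow> 'a \<Rightarrow> bool) \<Rightarrow> bool" where
  "well_covered V E \<longleftrightarrow> (\<forall>S T. maximal_indep_set V E S \<and> maximal_indep_set V E T \<longrightarrow> card S = card T)"

(* vertices of the constructed graph G': v-type Vv x j (row x \<in> V(G), column j)
   and u-type Uv i j (row i, column j) *)
datatype 'a gvert = Vv 'a nat | Uv nat nat

definition constr_verts :: "'a set \<Rightarrow> nat \<Rightarrow> 'a gvert set" where
  "constr_verts V k = {Vv x j | x j. x \<in> V \<and> 1 \<le> j \<and> j \<le> k}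
     \<union> {Uv i j | i j. 1 \<le> i \<and> i \<le> k \<and> 1 \<le> j \<and> j \<le> k \<and> i \<noteq> j}"

definition constr_edge :: "('a \<Rightarrow> 'a \<Rightarrow> bool) \<Rightarrow> 'a gvert \<Rightarrow> 'a gvert \<Rightarrow> bool" where
  "constr_edge E x y = (x \<noteq> y \<and>
     (case x of
        Vv a j \<Rightarrow> (case y of
            Vv b j' \<Rightarrow> j = j' \<or> a = b \<or> E a b   \<comment> \<open>column, row, G-edges\<close>
          | Uv c d \<Rightarrow> d = j \<or> c = j)          \<comment> \<open>column, cross edges\<close>
      | Uv a b \<Rightarrow> (case y of
            Vv c d \<Rightarrow> b = d \<or> a = d          \<comment> \<open>column, cross edges\<close>
          | Uv c d \<Rightarrow> b = d \<or> (a \<noteq> c \<and> b \<noteq> d))))"  \<comment> \<open>column, diagonal edges\<close>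

end

theory Submission
  imports Defs
begin

text \<open>Vertices in a common column are pairwise adjacent, so an independent set of G' has at most
  one vertex per column, hence at most k vertices; if it contains some u-vertex of row i, then all
  its u-vertices lie in row i and column i is empty, so it has at most k - 1 vertices. A maximal
  independent set misses at most one column, since otherwise a u-vertex could be added; so maximal
  independent sets have k - 1 or k vertices, and the first row of u-vertices is one of size k - 1.
  An independent set of size k consists of v-vertices in distinct columns and distinct rows, i.e.
  it is a copy of an independent set of size k of G placed on a transversal.\<close>

lemma indep_set_finite: "finite V \<Longrightarrow> indep_set V E S \<Longrightarrow> finite S"
  unfolding indep_set_def by (blast intro: finite_subset)

lemma finite_indep_sets: "finite V \<Longrightarrow> finite {S. indep_set V E S}"
  by (rule finite_subset[of _ "Pow V"]) (auto simp: indep_set_def)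

lemma indep_number_ge_iff:
  assumes "finite V"
  shows "m \<le> indep_number V E \<longleftrightarrow> (\<exists>S. indep_set V E S \<and> m \<le> card S)"
proof -
  have "{} \<in> {S. indep_set V E S}" by (simp add: indep_set_def)
  then show ?thesis
    unfolding indep_number_def using finite_indep_sets[OF assms] by (subst Max_ge_iff) auto
qed

lemma indep_number_le:
  assumes "finite V" and "\<And>S. indep_set V E S \<Longrightarrow> card S \<le> m"
  shows "indep_number V E \<le> m"
proof -
  have "{} \<in> {S. indep_set V E S}" by (simp add: indep_set_def)
  then show ?thesis
    unfolding indep_number_def using finite_indep_sets[OF assms(1)] assms(2)
    by (subst Max_le_iff) auto
qed

lemma indep_domination_number_eqI:
  assumes "finite V" and "maximal_indep_set V E S"
    and "\<And>T. maximal_indep_set V E T \<Longrightarrow> card S \<le> card T"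
  shows "indep_domination_number V E = card S"
  unfolding indep_domination_number_def
proof (rule Min_eqI)
  have "{S. maximal_indep_set V E S} \<subseteq> {S. indep_set V E S}"
    by (auto simp: maximal_indep_set_def)
  then show "finite (card ` {S. maximal_indep_set V E S})"
    using finite_indep_sets[OF assms(1)] by (blast intro: finite_subset)
qed (use assms(2,3) in auto)

lemma maximal_indep_set_indep: "maximal_indep_set V E S \<Longrightarrow> indep_set V E S"
  by (simp add: maximal_indep_set_def)

lemma maximal_indep_setI:
  assumes "finite V" and "indep_set V E S"
    and "\<And>T. indep_set V E T \<Longrightarrow> S \<subseteq> T \<Longrightarrow> card T \<le> card S"
  shows "maximal_indep_set V E S"
  unfolding maximal_indep_set_def
  using assms indep_set_finite card_seteq by metis

lemma maximal_indep_set_memI: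
  assumes "maximal_indep_set V E S" and "y \<in> V" and "\<And>z. z \<in> S \<Longrightarrow> \<not> E y z \<and> \<not> E z y"
  shows "y \<in> S"
proof -
  have "indep_set V E (insert y S)"
    using assms unfolding maximal_indep_set_def indep_set_def by auto
  then show ?thesis using assms(1) unfolding maximal_indep_set_def by blast
qed

fun col :: "'a gvert \<Rightarrow> nat" where
  "col (Vv a j) = j"
| "col (Uv i j) = j"

fun vrow :: "'a gvert \<Rightarrow> 'a" where
  "vrow (Vv a j) = a"
| "vrow (Uv i j) = undefined"

lemma Vv_in_constr_verts [simp]: "Vv a j \<in> constr_verts V k \<longleftrightarrow> a \<in> V \<and> 1 \<le> j \<and> j \<le> k"
  by (auto simp: constr_verts_def)

lemma Uv_in_constr_verts [simp]:
  "Uv i j \<in> constr_verts V k \<longleftrightarrow> 1 \<le> i \<and> i \<le> k \<and> 1 \<le> j \<and> j \<le> k \<and> i \<noteq> j"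
  by (auto simp: constr_verts_def)

lemma col_image_indep_constr:
  "indep_set (constr_verts V k) F S \<Longrightarrow> col ` S \<subseteq> {1..k}"
  unfolding indep_set_def constr_verts_def by auto

lemma finite_constr_verts: "finite V \<Longrightarrow> finite (constr_verts V k)"
proof -
  assume "finite V"
  moreover have "constr_verts V k
      \<subseteq> case_prod Vv ` (V \<times> {1..k}) \<union> case_prod Uv ` ({1..k} \<times> {1..k})"
    by (auto simp: constr_verts_def)
  ultimately show ?thesis by (auto intro: finite_subset)
qed

lemma constr_edge_same_col: "x \<noteq> y \<Longrightarrow> col x = col y \<Longrightarrow> constr_edge E x y"
  by (cases x; cases y) (auto simp: constr_edge_def)

lemma card_indep_constr_eq_card_col:
  assumes "indep_set W (constr_edge E) S"
  shows "card S = card (col ` S)"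
proof -
  have "inj_on col S"
    using assms constr_edge_same_col unfolding inj_on_def indep_set_def by blast
  then show ?thesis by (simp add: card_image)
qed

lemma card_indep_constr_le:
  assumes "indep_set (constr_verts V k) (constr_edge E) S"
  shows "card S \<le> k"
  using card_indep_constr_eq_card_col[OF assms] col_image_indep_constr[OF assms]
    card_mono[of "{1..k}" "col ` S"] by simp

lemma indep_constr_col_ne_Uv_row:
  assumes "indep_set (constr_verts V k) (constr_edge E) S" and "Uv i j \<in> S" and "x \<in> S"
  shows "col x \<noteq> i"
proof
  assume "col x = i"
  moreover have "i \<noteq> j" and "x \<in> constr_verts V k"
    using assms unfolding indep_set_def by auto
  ultimately have "Uv i j \<noteq> x \<and> constr_edge E (Uv i j) x"
    by (cases x) (auto simp: constr_edge_def)
  then show False using assms unfolding indep_set_def by blast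
qed

lemma indep_constr_Uv_row_eq:
  assumes "indep_set (constr_verts V k) (constr_edge E) S" and "Uv i j \<in> S" and "Uv c d \<in> S"
  shows "c = i"
  using assms unfolding indep_set_def by (force simp: constr_edge_def)

lemma card_indep_constr_Uv_le:
  assumes "indep_set (constr_verts V k) (constr_edge E) S" and "Uv i j \<in> S"
  shows "card S \<le> k - 1"
proof -
  have "i \<in> {1..k}" using assms unfolding indep_set_def by auto
  have "col ` S \<subseteq> {1..k} - {i}"
    using col_image_indep_constr[OF assms(1)] indep_constr_col_ne_Uv_row[OF assms] by blast
  then have "card (col ` S) \<le> card ({1..k} - {i})" by (simp add: card_mono)
  then show ?thesis
    using card_indep_constr_eq_card_col[OF assms(1)] \<open>i \<in> {1..k}\<close> by simp
qed

lemma maximal_indep_constr_col_cover: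
  assumes max: "maximal_indep_set (constr_verts V k) (constr_edge E) S"
  obtains m where "{1..k} - {m} \<subseteq> col ` S"
proof -
  have ind: "indep_set (constr_verts V k) (constr_edge E) S"
    using max by (rule maximal_indep_set_indep)
  show ?thesis
  proof (cases "\<exists>i j. Uv i j \<in> S")
    case True
    then obtain i j where u: "Uv i j \<in> S" by blast
    have "i \<in> {1..k}" using ind u unfolding indep_set_def by auto
    have "c \<in> col ` S" if c: "c \<in> {1..k} - {i}" for c
    proof (rule ccontr)
      assume nc: "c \<notin> col ` S"
      have "Uv i c \<in> S"
      proof (rule maximal_indep_set_memI[OF max])
        show "Uv i c \<in> constr_verts V k" using c \<open>i \<in> {1..k}\<close> by auto
        fix z assume z: "z \<in> S"
        then have "col z \<noteq> c" "col z \<noteq> i"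
          using nc indep_constr_col_ne_Uv_row[OF ind u] by force+
        moreover have "z = Uv r s \<Longrightarrow> r = i" for r s
          using z indep_constr_Uv_row_eq[OF ind u] by blast
        ultimately show "\<not> constr_edge E (Uv i c) z \<and> \<not> constr_edge E z (Uv i c)"
          by (cases z) (auto simp: constr_edge_def)
      qed
      then show False using nc by force
    qed
    then show ?thesis using that by blast
  next
    case False
    have "p = q" if p: "p \<in> {1..k} - col ` S" and q: "q \<in> {1..k} - col ` S" for p q
    proof (rule ccontr)
      assume "p \<noteq> q"
      have "Uv p q \<in> S"
      proof (rule maximal_indep_set_memI[OF max])
        show "Uv p q \<in> constr_verts V k" using p q \<open>p \<noteq> q\<close> by auto
        fix z assume z: "z \<in> S"
        then obtain a d where "z = Vv a d" using False by (cases z) auto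
        moreover have "d \<noteq> p" "d \<noteq> q" using p q z calculation by force+
        ultimately show "\<not> constr_edge E (Uv p q) z \<and> \<not> constr_edge E z (Uv p q)"
          by (auto simp: constr_edge_def)
      qed
      then show False using False by blast
    qed
    then show ?thesis using that by blast
  qed
qed

lemma card_maximal_indep_constr_ge:
  assumes "maximal_indep_set (constr_verts V k) (constr_edge E) S"
  shows "k - 1 \<le> card S"
proof -
  have ind: "indep_set (constr_verts V k) (constr_edge E) S"
    using assms by (rule maximal_indep_set_indep)
  obtain m where m: "{1..k} - {m} \<subseteq> col ` S" using maximal_indep_constr_col_cover[OF assms] .
  have "finite (col ` S)" using col_image_indep_constr[OF ind] by (rule finite_subset) simp
  have "k - 1 \<le> card ({1..k} - {m})" by (simp add: card_Diff_singleton_if)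
  also have "\<dots> \<le> card (col ` S)" using m \<open>finite (col ` S)\<close> by (rule card_mono[rotated])
  also have "\<dots> = card S" using card_indep_constr_eq_card_col[OF ind] by simp
  finally show ?thesis .
qed

definition first_row :: "nat \<Rightarrow> 'a gvert set" where
  "first_row k = (\<lambda>j. Uv 1 j) ` {2..k}"

lemma card_first_row: "card (first_row k) = k - 1"
  by (simp add: first_row_def card_image inj_on_def)

lemma first_row_maximal:
  assumes "finite V" and "2 \<le> k"
  shows "maximal_indep_set (constr_verts V k) (constr_edge E) (first_row k)"
proof (rule maximal_indep_setI[OF finite_constr_verts[OF assms(1)]])
  show "indep_set (constr_verts V k) (constr_edge E) (first_row k)"
    unfolding indep_set_def first_row_def by (auto simp: constr_edge_def)
  fix T assume "indep_set (constr_verts V k) (constr_edge E) T" "first_row k \<subseteq> T"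
  moreover have "Uv 1 2 \<in> first_row k" using assms(2) by (auto simp: first_row_def)
  ultimately show "card T \<le> card (first_row k)"
    unfolding card_first_row using card_indep_constr_Uv_le by blast
qed

lemma indep_constr_of_indep:
  assumes "indep_set V E S" and "bij_betw f {1..k} S"
  shows "indep_set (constr_verts V k) (constr_edge E) ((\<lambda>j. Vv (f j) j) ` {1..k})"
proof -
  have "f j \<in> S" "f j \<in> V" if "j \<in> {1..k}" for j
    using assms that unfolding bij_betw_def indep_set_def by auto
  moreover have "f j \<noteq> f j'" if "j \<in> {1..k}" "j' \<in> {1..k}" "j \<noteq> j'" for j j'
    using assms(2) that unfolding bij_betw_def inj_on_def by blast
  ultimately show ?thesis
    using assms(1) unfolding indep_set_def by (auto simp: constr_edge_def)
qed

lemma indep_of_indep_constr: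
  assumes "indep_set (constr_verts V k) (constr_edge E) T" and "\<And>i j. Uv i j \<notin> T"
  shows "indep_set V E (vrow ` T)" and "card (vrow ` T) = card T"
proof -
  have v_type: "x \<in> T \<Longrightarrow> x = Vv (vrow x) (col x)" for x
    using assms(2) by (cases x) auto
  have no_edge: "\<not> constr_edge E x y" if "x \<in> T" "y \<in> T" "x \<noteq> y" for x y
    using assms(1) that unfolding indep_set_def by blast
  have rows: "vrow x \<in> V \<and> (vrow x \<noteq> vrow y \<longrightarrow> \<not> E (vrow x) (vrow y))"
    if xy: "x \<in> T" "y \<in> T" for x y
  proof -
    obtain a j b j' where x: "x = Vv a j" and y: "y = Vv b j'"
      using v_type[OF xy(1)] v_type[OF xy(2)] by blast
    have "x \<in> constr_verts V k" using assms(1) xy(1) unfolding indep_set_def by blast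
    moreover have "a \<noteq> b \<Longrightarrow> \<not> constr_edge E x y" using no_edge xy x y by blast
    ultimately show ?thesis unfolding x y by (auto simp: constr_edge_def)
  qed
  then show "indep_set V E (vrow ` T)"
    unfolding indep_set_def by blast
  have "inj_on vrow T"
  proof (rule inj_onI)
    fix x y assume xy: "x \<in> T" "y \<in> T" and "vrow x = vrow y"
    obtain a j j' where x: "x = Vv a j" and y: "y = Vv a j'"
      using v_type[OF xy(1)] v_type[OF xy(2)] \<open>vrow x = vrow y\<close> by metis
    show "x = y"
      using no_edge[OF xy] unfolding x y by (auto simp: constr_edge_def)
  qed
  then show "card (vrow ` T) = card T" by (rule card_image)
qed

lemma ex_indep_constr_card_iff:
  assumes "finite V" and "0 < k"
  shows "(\<exists>T. indep_set (constr_verts V k) (constr_edge E) T \<and> card T = k)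
    \<longleftrightarrow> k \<le> indep_number V E"
proof
  assume "\<exists>T. indep_set (constr_verts V k) (constr_edge E) T \<and> card T = k"
  then obtain T where T: "indep_set (constr_verts V k) (constr_edge E) T" "card T = k" by blast
  have "Uv i j \<notin> T" for i j
    using card_indep_constr_Uv_le[OF T(1)] T(2) assms(2) by fastforce
  then show "k \<le> indep_number V E"
    using indep_of_indep_constr[OF T(1)] T(2) indep_number_ge_iff[OF assms(1)] by auto
next
  assume "k \<le> indep_number V E"
  then obtain S where S: "indep_set V E S" "k \<le> card S"
    using indep_number_ge_iff[OF assms(1)] by blast
  obtain S' where S': "S' \<subseteq> S" "card S' = k" "finite S'"
    using obtain_subset_with_card_n[OF S(2)] .
  have "indep_set V E S'" using S(1) S'(1) unfolding indep_set_def by blast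
  obtain f where f: "bij_betw f {1..k} S'"
    using ex_bij_betw_nat_finite_1[OF S'(3)] S'(2) by auto
  have "card ((\<lambda>j. Vv (f j) j) ` {1..k}) = k" by (simp add: card_image inj_on_def)
  then show "\<exists>T. indep_set (constr_verts V k) (constr_edge E) T \<and> card T = k"
    using indep_constr_of_indep[OF \<open>indep_set V E S'\<close> f] by blast
qed

lemma not_well_covered_constr_iff:
  assumes "finite V" and "2 \<le> k"
  shows "\<not> well_covered (constr_verts V k) (constr_edge E)
    \<longleftrightarrow> (\<exists>T. indep_set (constr_verts V k) (constr_edge E) T \<and> card T = k)"
proof
  assume "\<not> well_covered (constr_verts V k) (constr_edge E)"
  then obtain S T where ST: "maximal_indep_set (constr_verts V k) (constr_edge E) S"
      "maximal_indep_set (constr_verts V k) (constr_edge E) T" "card S \<noteq> card T"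
    unfolding well_covered_def by blast
  have "k - 1 \<le> card S" "k - 1 \<le> card T" "card S \<le> k" "card T \<le> k"
    using ST(1,2) card_maximal_indep_constr_ge card_indep_constr_le maximal_indep_set_indep by blast+
  then have "card S = k \<or> card T = k" using ST(3) by linarith
  then show "\<exists>T. indep_set (constr_verts V k) (constr_edge E) T \<and> card T = k"
    using ST(1,2) maximal_indep_set_indep by blast
next
  assume "\<exists>T. indep_set (constr_verts V k) (constr_edge E) T \<and> card T = k"
  then obtain T where T: "indep_set (constr_verts V k) (constr_edge E) T" "card T = k" by blast
  have "maximal_indep_set (constr_verts V k) (constr_edge E) T"
    by (rule maximal_indep_setI[OF finite_constr_verts[OF assms(1)] T(1)])
      (simp add: T(2) card_indep_constr_le)
  moreover note first_row_maximal[OF assms]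
  moreover have "card T \<noteq> card (first_row k)"
    unfolding card_first_row using T(2) assms(2) by simp
  ultimately show "\<not> well_covered (constr_verts V k) (constr_edge E)"
    unfolding well_covered_def by blast
qed

theorem mainTheorem9:
  fixes V :: "'a set" and E :: "'a \<Rightarrow> 'a \<Rightarrow> bool" and k :: nat
  assumes "simple_graph V E" and "k \<ge> 2"
  shows "indep_domination_number (constr_verts V k) (constr_edge E) = k - 1
    \<and> indep_gap (constr_verts V k) (constr_edge E) \<le> 1
    \<and> (indep_number V E \<ge> k \<longleftrightarrow> indep_number (constr_verts V k) (constr_edge E) \<ge> k)
    \<and> (indep_number V E \<ge> k \<longleftrightarrow> \<not> well_covered (constr_verts V k) (constr_edge E))"
proof -
  let ?W = "constr_verts V k" and ?F = "constr_edge E"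
  have "finite V" using assms(1) by (simp add: simple_graph_def)
  then have fin: "finite ?W" by (rule finite_constr_verts)
  have i: "indep_domination_number ?W ?F = k - 1"
    using indep_domination_number_eqI[OF fin first_row_maximal[OF \<open>finite V\<close> assms(2)]]
      card_maximal_indep_constr_ge
    unfolding card_first_row by blast
  have alpha_le: "indep_number ?W ?F \<le> k"
    using indep_number_le[OF fin] card_indep_constr_le by blast
  have alpha_ge: "k \<le> indep_number ?W ?F \<longleftrightarrow> (\<exists>T. indep_set ?W ?F T \<and> card T = k)"
    using indep_number_ge_iff[OF fin] card_indep_constr_le le_antisym by blast
  show ?thesis
    using i alpha_le alpha_ge ex_indep_constr_card_iff[OF \<open>finite V\<close>, of k E]
      not_well_covered_constr_iff[OF \<open>finite V\<close> assms(2), of E] assms(2)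
    by (auto simp: indep_gap_def)
qed

end
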